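(* Let $X$ be a set of reals such that for every $k\ge1$ the power $X^k$ satisfies $\mathrm{Split}(\Omega,\Lambda)$. Then $X$ satisfies $\mathrm{Split}(\Omega,\Omega)$. Analogously, if every $X^k$ satisfies $\mathrm{Split}(C_\Omega,C_\Lambda)$ then $X$ satisfies $\mathrm{Split}(C_\Omega,C_\Omega)$, and if every $X^k$ satisfies $\mathrm{Split}(B_\Omega,B_\Lambda)$ then $X$ satisfies $\mathrm{Split}(B_\Omega,B_\Omega)$.
   Context: A set of reals is an infinite topological space homeomorphic to a subset of $\mathbb R$; $X^k$ carries the product topology. A cover of a space $Z$ is a family $\mathcal U$ of subsets of $Z$ with $\bigcup\mathcal U=Z$ such that $Z\not\subseteq U$ for all $U\in\mathcal U$; it is a large cover if every point lies in infinitely many members, and an $\omega$-cover if every finite subset of $Z$ is contained in some member. $\Lambda,\Omega$ are the collections of open large covers and open $\omega$-covers of the space; $B_\Lambda,B_\Omega$ the collections of countable such covers by Borel sets; $C_\Lambda,C_\Omega$ the collections of countable such covers by clopen sets. A space satisfies $\mathrm{Split}(\mathfrak U,\mathfrak V)$ if every $\mathcal U\in\mathfrak U$ can be partitioned into two disjoint subfamilies each containing a subfamily belonging to $\mathfrak V$. *)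

theory Defs
  imports "HOL-Analysis.Analysis"
begin

definition is_cover :: "'a topology \<Rightarrow> 'a set set \<Rightarrow> bool" where
  "is_cover T \<U> \<longleftrightarrow> (\<forall>U\<in>\<U>. U \<subseteq> topspace T) \<and> \<Union>\<U> = topspace T
     \<and> (\<forall>U\<in>\<U>. \<not> topspace T \<subseteq> U)"

definition large_cover :: "'a topology \<Rightarrow> 'a set set \<Rightarrow> bool" where
  "large_cover T \<U> \<longleftrightarrow> is_cover T \<U> \<and> (\<forall>x\<in>topspace T. infinite {U\<in>\<U>. x \<in> U})"

definition omega_cover :: "'a topology \<Rightarrow> 'a set set \<Rightarrow> bool" where
  "omega_cover T \<U> \<longleftrightarrow> is_cover T \<U> \<and>
     (\<forall>F. finite F \<and> F \<subseteq> topspace T \<longrightarrow> (\<exists>U\<in>\<U>. F \<subseteq> U))"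

definition borel_sets_of :: "'a topology \<Rightarrow> 'a set set" where
  "borel_sets_of T = sigma_sets (topspace T) {U. openin T U}"

definition Lambda :: "'a topology \<Rightarrow> 'a set set \<Rightarrow> bool" where
  "Lambda T \<U> \<longleftrightarrow> large_cover T \<U> \<and> (\<forall>U\<in>\<U>. openin T U)"

definition Omega :: "'a topology \<Rightarrow> 'a set set \<Rightarrow> bool" where
  "Omega T \<U> \<longleftrightarrow> omega_cover T \<U> \<and> (\<forall>U\<in>\<U>. openin T U)"

definition B_Lambda :: "'a topology \<Rightarrow> 'a set set \<Rightarrow> bool" where
  "B_Lambda T \<U> \<longleftrightarrow> large_cover T \<U> \<and> countable \<U> \<and> \<U> \<subseteq> borel_sets_of T"

definition B_Omega :: "'a topology \<Rightarrow> 'a set set \<Rightarrow> bool" where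
  "B_Omega T \<U> \<longleftrightarrow> omega_cover T \<U> \<and> countable \<U> \<and> \<U> \<subseteq> borel_sets_of T"

definition C_Lambda :: "'a topology \<Rightarrow> 'a set set \<Rightarrow> bool" where
  "C_Lambda T \<U> \<longleftrightarrow> large_cover T \<U> \<and> countable \<U> \<and>
     (\<forall>U\<in>\<U>. openin T U \<and> closedin T U)"

definition C_Omega :: "'a topology \<Rightarrow> 'a set set \<Rightarrow> bool" where
  "C_Omega T \<U> \<longleftrightarrow> omega_cover T \<U> \<and> countable \<U> \<and>
     (\<forall>U\<in>\<U>. openin T U \<and> closedin T U)"

definition Split ::
  "('a topology \<Rightarrow> 'a set set \<Rightarrow> bool) \<Rightarrow> ('a topology \<Rightarrow> 'a set set \<Rightarrow> bool) \<Rightarrow> 'a topology \<Rightarrow> bool" where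
  "Split A B T \<longleftrightarrow> (\<forall>\<U>. A T \<U> \<longrightarrow>
     (\<exists>\<U>1 \<U>2. \<U>1 \<union> \<U>2 = \<U> \<and> \<U>1 \<inter> \<U>2 = {} \<and>
        (\<exists>\<V>\<subseteq>\<U>1. B T \<V>) \<and> (\<exists>\<V>\<subseteq>\<U>2. B T \<V>)))"

definition real_subspace :: "real set \<Rightarrow> real topology" where
  "real_subspace X = subtopology euclideanreal X"

definition power_space :: "real set \<Rightarrow> nat \<Rightarrow> (nat \<Rightarrow> real) topology" where
  "power_space X k = product_topology (\<lambda>i. subtopology euclideanreal X) {..<k}"

end

theory Submission
  imports Defs
begin

text \<open>
  If \<U> is an \<omega>-cover of X, then the cubes U^k (U \<in> \<U>) form an \<omega>-cover of X^k of
  the same kind (open, clopen, Borel). Any cover of X^k by cubes U^k with U in a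
  subfamily \<D> makes \<D> a k-cover of X, since every set of at most k points of X is the
  range of a single point of X^k. So Split(\<Omega>, \<Lambda>) for X^k splits \<U> into two disjoint
  k-covers, and one of them is still an \<omega>-cover, because an \<omega>-cover is never the union
  of two families that are not. Peeling off k-covers for k = 1, 2, 3, \<dots> yields pairwise
  disjoint subfamilies \<D>_k \<subseteq> \<U> with \<D>_k a k-cover; the union of the even-indexed
  ones and its complement in \<U> are both \<omega>-covers.
\<close>

definition k_cover :: "'a set \<Rightarrow> nat \<Rightarrow> 'a set set \<Rightarrow> bool" where
  "k_cover S k \<U> \<longleftrightarrow> (\<forall>F. finite F \<and> F \<subseteq> S \<and> card F \<le> k \<longrightarrow> (\<exists>U\<in>\<U>. F \<subseteq> U))"

definition omega_family :: "'a set \<Rightarrow> 'a set set \<Rightarrow> bool" where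
  "omega_family S \<U> \<longleftrightarrow> (\<forall>F. finite F \<and> F \<subseteq> S \<longrightarrow> (\<exists>U\<in>\<U>. F \<subseteq> U))"

lemma k_cover_mono: "k_cover S k \<U> \<Longrightarrow> j \<le> k \<Longrightarrow> \<U> \<subseteq> \<V> \<Longrightarrow> k_cover S j \<V>"
  unfolding k_cover_def by (meson le_trans subsetD)

lemma omega_family_iff_k_covers: "omega_family S \<U> \<longleftrightarrow> (\<forall>k. k_cover S k \<U>)"
  unfolding omega_family_def k_cover_def by auto

lemma omega_family_Un:
  assumes "omega_family S (\<A> \<union> \<B>)"
  shows "omega_family S \<A> \<or> omega_family S \<B>"
proof (rule ccontr)
  assume "\<not> ?thesis"
  then have "\<not> omega_family S \<A>" "\<not> omega_family S \<B>"
    by simp_all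
  then obtain F G where F: "finite F" "F \<subseteq> S" "\<forall>U\<in>\<A>. \<not> F \<subseteq> U"
    and G: "finite G" "G \<subseteq> S" "\<forall>U\<in>\<B>. \<not> G \<subseteq> U"
    unfolding omega_family_def by auto
  have "finite (F \<union> G)" "F \<union> G \<subseteq> S"
    using F G by simp_all
  then obtain U where "U \<in> \<A> \<union> \<B>" "F \<union> G \<subseteq> U"
    using assms unfolding omega_family_def by blast
  then show False
    using F(3) G(3) by blast
qed

lemma disjoint_family_by_peeling:
  fixes R :: "nat \<Rightarrow> 'a set \<Rightarrow> bool"
  assumes peel: "\<And>\<C> n. P \<C> \<Longrightarrow> \<exists>\<D>\<subseteq>\<C>. R n \<D> \<and> P (\<C> - \<D>)" and "P \<U>"
  shows "\<exists>\<D>. disjoint_family \<D> \<and> (\<forall>n. \<D> n \<subseteq> \<U> \<and> R n (\<D> n))"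
proof -
  define pick where "pick n \<C> = (SOME \<D>. \<D> \<subseteq> \<C> \<and> R n \<D> \<and> P (\<C> - \<D>))" for n \<C>
  have pick: "pick n \<C> \<subseteq> \<C> \<and> R n (pick n \<C>) \<and> P (\<C> - pick n \<C>)" if "P \<C>" for n \<C>
    unfolding pick_def using someI_ex[OF peel[OF that]] by blast
  define rest where "rest = rec_nat \<U> (\<lambda>n \<C>. \<C> - pick n \<C>)"
  have rest_Suc: "rest (Suc n) = rest n - pick n (rest n)" for n
    by (simp add: rest_def)
  have P_rest: "P (rest n)" for n
    by (induction n) (use \<open>P \<U>\<close> pick in \<open>simp_all add: rest_def\<close>)
  define \<D> where "\<D> n = pick n (rest n)" for n
  have "decseq rest"
    by (rule decseq_SucI) (simp add: rest_Suc Diff_subset)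
  then have \<D>_rest: "\<D> n \<subseteq> rest m" if "m \<le> n" for m n
    using pick[OF P_rest] that unfolding \<D>_def decseq_def by blast
  have "\<D> m \<inter> \<D> n = {}" if "m < n" for m n
    using \<D>_rest[of "Suc m" n] that by (auto simp: rest_Suc \<D>_def)
  then have "disjoint_family \<D>"
    unfolding disjoint_family_on_def by (metis inf_commute linorder_neq_iff)
  moreover have "\<D> n \<subseteq> \<U> \<and> R n (\<D> n)" for n
    using \<D>_rest[of 0 n] pick[OF P_rest] by (simp add: rest_def \<D>_def)
  ultimately show ?thesis by blast
qed

lemma omega_families_of_disjoint_k_covers:
  assumes "disjoint_family \<D>" "\<And>n. \<D> n \<subseteq> \<U>" "\<And>n. k_cover S n (\<D> n)"
  shows "omega_family S (\<Union>n\<in>Collect even. \<D> n)" "omega_family S (\<U> - (\<Union>n\<in>Collect even. \<D> n))"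
proof -
  let ?\<A> = "\<Union>n\<in>Collect even. \<D> n"
  have "k_cover S k ?\<A>" for k
  proof (rule k_cover_mono[OF assms(3)[of "2 * k"]])
    show "\<D> (2 * k) \<subseteq> ?\<A>"
      by (rule UN_upper) simp
  qed simp
  then show "omega_family S ?\<A>"
    by (simp add: omega_family_iff_k_covers)
  have odd_part: "\<D> (Suc (2 * k)) \<subseteq> \<U> - ?\<A>" for k
  proof -
    have "\<D> (Suc (2 * k)) \<inter> \<D> n = {}" if "even n" for n
    proof -
      have "Suc (2 * k) \<noteq> n"
        using that by auto
      then show ?thesis
        using assms(1) by (simp add: disjoint_family_on_def)
    qed
    then show ?thesis
      using assms(2) by blast
  qed
  have "k_cover S k (\<U> - ?\<A>)" for k
    by (rule k_cover_mono[OF assms(3) _ odd_part[of k]]) simp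
  then show "omega_family S (\<U> - ?\<A>)"
    by (simp add: omega_family_iff_k_covers)
qed

lemma split_into_omega_subfamilies:
  assumes omega: "\<And>\<C>. P \<C> \<Longrightarrow> omega_family S \<C>"
    and subfamily: "\<And>\<C> \<D>. P \<C> \<Longrightarrow> \<D> \<subseteq> \<C> \<Longrightarrow> omega_family S \<D> \<Longrightarrow> P \<D>"
    and split: "\<And>\<C> k. P \<C> \<Longrightarrow> k \<ge> 1 \<Longrightarrow> \<exists>\<D>\<subseteq>\<C>. k_cover S k \<D> \<and> k_cover S k (\<C> - \<D>)"
    and "P \<U>"
  shows "\<exists>\<A>\<subseteq>\<U>. P \<A> \<and> P (\<U> - \<A>)"
proof -
  have peel: "\<exists>\<D>\<subseteq>\<C>. k_cover S k \<D> \<and> P (\<C> - \<D>)" if "P \<C>" for \<C> k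
  proof -
    obtain \<D> where \<D>: "\<D> \<subseteq> \<C>" "k_cover S (Suc k) \<D>" "k_cover S (Suc k) (\<C> - \<D>)"
      using split[OF \<open>P \<C>\<close>, of "Suc k"] by auto
    then have covers: "k_cover S k \<D>" "k_cover S k (\<C> - \<D>)"
      using k_cover_mono[of S "Suc k" _ k] by simp_all
    have "\<D> \<union> (\<C> - \<D>) = \<C>"
      using \<D>(1) by blast
    then consider "omega_family S (\<C> - \<D>)" | "omega_family S \<D>"
      using omega_family_Un omega[OF \<open>P \<C>\<close>] by metis
    then show ?thesis
    proof cases
      case 1
      then have "P (\<C> - \<D>)"
        by (rule subfamily[OF \<open>P \<C>\<close> Diff_subset])
      with \<D>(1) covers(1) show ?thesis
        by blast
    next
      case 2
      then have "P \<D>"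
        by (rule subfamily[OF \<open>P \<C>\<close> \<D>(1)])
      moreover have "\<C> - (\<C> - \<D>) = \<D>"
        using \<D>(1) by blast
      ultimately show ?thesis
        using covers(2) by (intro exI[of _ "\<C> - \<D>"]) simp
    qed
  qed
  obtain \<D> where \<D>: "disjoint_family \<D>" "\<And>n. \<D> n \<subseteq> \<U>" "\<And>n. k_cover S n (\<D> n)"
    using disjoint_family_by_peeling[of P "k_cover S", OF peel \<open>P \<U>\<close>] by blast
  let ?\<A> = "\<Union>n\<in>Collect even. \<D> n"
  have "?\<A> \<subseteq> \<U>"
    using \<D>(2) by blast
  then have "P ?\<A>"
    using \<D> by (intro subfamily[OF \<open>P \<U>\<close>] omega_families_of_disjoint_k_covers)
  moreover have "P (\<U> - ?\<A>)"
    using \<D> by (intro subfamily[OF \<open>P \<U>\<close> Diff_subset] omega_families_of_disjoint_k_covers)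
  ultimately show ?thesis
    using \<open>?\<A> \<subseteq> \<U>\<close> by blast
qed

abbreviation cartesian_power :: "nat \<Rightarrow> 'a set \<Rightarrow> (nat \<Rightarrow> 'a) set" where
  "cartesian_power k U \<equiv> Pi\<^sub>E {..<k} (\<lambda>_. U)"

abbreviation power_topology :: "'a topology \<Rightarrow> nat \<Rightarrow> (nat \<Rightarrow> 'a) topology" where
  "power_topology T k \<equiv> product_topology (\<lambda>_. T) {..<k}"

lemma image_subset_if_in_cartesian_power: "t \<in> cartesian_power k U \<Longrightarrow> t ` {..<k} \<subseteq> U"
  by (auto simp: PiE_iff)

lemma tuple_enumerating_finite_set:
  assumes "finite F" "F \<subseteq> S" "card F \<le> k" "S \<noteq> {}"
  obtains t where "t \<in> cartesian_power k S" "F \<subseteq> t ` {..<k}"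
proof (cases "F = {}")
  case True
  have "cartesian_power k S \<noteq> {}"
    using assms(4) by (simp add: PiE_eq_empty_iff)
  then show ?thesis
    using that True by blast
next
  case False
  obtain h where h: "bij_betw h {0..<card F} F"
    using ex_bij_betw_nat_finite[OF \<open>finite F\<close>] by blast
  have "card F > 0"
    using False \<open>finite F\<close> by (simp add: card_gt_0_iff)
  define t where "t = restrict (\<lambda>i. h (min i (card F - 1))) {..<k}"
  have "h j \<in> F" if "j < card F" for j
    using h that by (auto simp: bij_betw_def)
  then have "t \<in> cartesian_power k S"
    using \<open>card F > 0\<close> assms(2) by (auto simp: t_def)
  moreover have "F \<subseteq> t ` {..<k}"
  proof
    fix y assume "y \<in> F"
    then obtain j where "j < card F" "y = h j"
      using h unfolding bij_betw_def by (metis atLeastLessThan_iff imageE zero_le)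
    then show "y \<in> t ` {..<k}"
      using assms(3) by (auto simp: t_def image_iff intro!: bexI[of _ j])
  qed
  ultimately show ?thesis
    using that by blast
qed

lemma k_cover_if_cartesian_powers_cover:
  assumes "cartesian_power k S \<subseteq> \<Union>(cartesian_power k ` \<D>)" "S \<noteq> {}"
  shows "k_cover S k \<D>"
  unfolding k_cover_def
proof (intro allI impI)
  fix F assume F: "finite F \<and> F \<subseteq> S \<and> card F \<le> k"
  obtain t where t: "t \<in> cartesian_power k S" "F \<subseteq> t ` {..<k}"
    by (rule tuple_enumerating_finite_set[of F S k]) (use F assms(2) in auto)
  have "t \<in> \<Union>(cartesian_power k ` \<D>)"
    using assms(1) t(1) by (rule subsetD)
  then obtain U where "U \<in> \<D>" "t \<in> cartesian_power k U"
    by (rule UN_E)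
  with t(2) show "\<exists>U\<in>\<D>. F \<subseteq> U"
    using image_subset_if_in_cartesian_power by blast
qed

lemma omega_family_cartesian_powers:
  assumes "omega_family S \<U>"
  shows "omega_family (cartesian_power k S) (cartesian_power k ` \<U>)"
  unfolding omega_family_def
proof (intro allI impI)
  fix G assume G: "finite G \<and> G \<subseteq> cartesian_power k S"
  let ?F = "\<Union>t\<in>G. t ` {..<k}"
  have "finite ?F" "?F \<subseteq> S"
    using G image_subset_if_in_cartesian_power by auto
  then obtain U where "U \<in> \<U>" "?F \<subseteq> U"
    using assms unfolding omega_family_def by auto
  then have "G \<subseteq> cartesian_power k U"
    using G by (auto simp: PiE_iff)
  then show "\<exists>W\<in>cartesian_power k ` \<U>. G \<subseteq> W"
    using \<open>U \<in> \<U>\<close> by blast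
qed


lemma omega_cover_iff_omega_family:
  "omega_cover T \<U> \<longleftrightarrow>
     (\<forall>U\<in>\<U>. U \<subseteq> topspace T \<and> \<not> topspace T \<subseteq> U) \<and> omega_family (topspace T) \<U>"
proof -
  have "topspace T \<subseteq> \<Union>\<U>" if omega: "omega_family (topspace T) \<U>"
  proof
    fix x assume "x \<in> topspace T"
    then obtain U where "U \<in> \<U>" "{x} \<subseteq> U"
      using omega[unfolded omega_family_def, rule_format, of "{x}"] by auto
    then show "x \<in> \<Union>\<U>"
      by blast
  qed
  then show ?thesis
    unfolding omega_cover_def is_cover_def omega_family_def[symmetric] by blast
qed

lemma omega_cover_nonempty_space:
  assumes "omega_cover T \<U>"
  shows "topspace T \<noteq> {}"
proof -
  obtain U where "U \<in> \<U>"
    using assms unfolding omega_cover_iff_omega_family omega_family_def by (meson empty_subsetI finite.emptyI)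
  then show ?thesis
    using assms unfolding omega_cover_iff_omega_family by auto
qed

lemma omega_cover_subfamily:
  "omega_cover T \<U> \<Longrightarrow> \<V> \<subseteq> \<U> \<Longrightarrow> omega_family (topspace T) \<V> \<Longrightarrow> omega_cover T \<V>"
  unfolding omega_cover_iff_omega_family by blast

lemma omega_cover_cartesian_powers:
  assumes "omega_cover T \<U>" "k \<ge> 1"
  shows "omega_cover (power_topology T k) (cartesian_power k ` \<U>)"
proof -
  have nonempty: "cartesian_power k (topspace T) \<noteq> {}"
    using omega_cover_nonempty_space[OF assms(1)] by (simp add: PiE_eq_empty_iff)
  have "cartesian_power k U \<subseteq> cartesian_power k (topspace T)"
    "\<not> cartesian_power k (topspace T) \<subseteq> cartesian_power k U" if "U \<in> \<U>" for U
  proof -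
    have "U \<subseteq> topspace T" "\<not> topspace T \<subseteq> U"
      using assms(1) that unfolding omega_cover_iff_omega_family by auto
    moreover have "0 \<in> {..<k}"
      using assms(2) by simp
    ultimately show "cartesian_power k U \<subseteq> cartesian_power k (topspace T)"
      "\<not> cartesian_power k (topspace T) \<subseteq> cartesian_power k U"
      using nonempty unfolding subset_PiE by blast+
  qed
  moreover have "omega_family (topspace (power_topology T k)) (cartesian_power k ` \<U>)"
    using assms(1) unfolding omega_cover_iff_omega_family by (simp add: omega_family_cartesian_powers)
  ultimately show ?thesis
    unfolding omega_cover_iff_omega_family by auto
qed


lemma borel_sets_of_preimage:
  assumes "continuous_map T S f" "A \<in> borel_sets_of S"
  shows "{x \<in> topspace T. f x \<in> A} \<in> borel_sets_of T"
proof -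
  have "{x \<in> topspace T. f x \<in> A} \<in> {f -` B \<inter> topspace T | B. B \<in> borel_sets_of S}"
    using assms(2) by blast
  also have "\<dots> = sigma_sets (topspace T) {f -` B \<inter> topspace T | B. B \<in> {U. openin S U}}"
    unfolding borel_sets_of_def
    by (rule sigma_sets_vimage_commute) (use assms(1) continuous_map_funspace in blast)
  also have "\<dots> \<subseteq> borel_sets_of T"
    unfolding borel_sets_of_def
  proof (rule sigma_sets_mono', rule subsetI)
    fix V assume "V \<in> {f -` B \<inter> topspace T | B. B \<in> {U. openin S U}}"
    then obtain B where "openin S B" "V = {x \<in> topspace T. f x \<in> B}"
      by blast
    then show "V \<in> {U. openin T U}"
      using openin_continuous_map_preimage[OF assms(1)] by blast
  qed
  finally show ?thesis .
qed

lemma borel_cartesian_power: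
  assumes "U \<in> borel_sets_of T" "k \<ge> 1"
  shows "cartesian_power k U \<in> borel_sets_of (power_topology T k)"
proof -
  interpret sigma_algebra "topspace (power_topology T k)" "borel_sets_of (power_topology T k)"
    unfolding borel_sets_of_def by (rule sigma_algebra_sigma_sets) (blast dest: openin_subset)
  have "U \<subseteq> topspace T"
    by (rule sigma_sets_into_sp[OF _ assms(1)[unfolded borel_sets_of_def]]) (auto dest: openin_subset)
  have preimage: "{t \<in> topspace (power_topology T k). t i \<in> U} \<in> borel_sets_of (power_topology T k)"
    if "i < k" for i
  proof -
    have "continuous_map (power_topology T k) T (\<lambda>t. t i)"
      using continuous_map_product_projection[of i "{..<k}" "\<lambda>_. T"] that by simp
    then show ?thesis
      using assms(1) by (rule borel_sets_of_preimage)
  qed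
  have "0 \<in> {..<k}"
    using assms(2) by simp
  with \<open>U \<subseteq> topspace T\<close>
  have "cartesian_power k U = (\<Inter>i<k. {t \<in> topspace (power_topology T k). t i \<in> U})"
    by (auto simp: PiE_iff) (meson extensional_arb lessThan_iff)
  also have "\<dots> \<in> borel_sets_of (power_topology T k)"
    using preimage \<open>0 \<in> {..<k}\<close> by (intro finite_INT) auto
  finally show ?thesis .
qed

lemma Omega_cartesian_powers:
  "Omega T \<U> \<Longrightarrow> k \<ge> 1 \<Longrightarrow> Omega (power_topology T k) (cartesian_power k ` \<U>)"
  by (auto simp: Omega_def omega_cover_cartesian_powers openin_PiE)

lemma C_Omega_cartesian_powers:
  "C_Omega T \<U> \<Longrightarrow> k \<ge> 1 \<Longrightarrow> C_Omega (power_topology T k) (cartesian_power k ` \<U>)"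
  by (auto simp: C_Omega_def omega_cover_cartesian_powers openin_PiE closedin_product_topology)

lemma B_Omega_cartesian_powers:
  "B_Omega T \<U> \<Longrightarrow> k \<ge> 1 \<Longrightarrow> B_Omega (power_topology T k) (cartesian_power k ` \<U>)"
  by (auto simp: B_Omega_def omega_cover_cartesian_powers borel_cartesian_power)

lemma k_covers_if_Split_power:
  assumes "Split Q L (power_topology T k)"
    and "Q (power_topology T k) (cartesian_power k ` \<C>)"
    and cover: "\<And>\<V>. L (power_topology T k) \<V> \<Longrightarrow> is_cover (power_topology T k) \<V>"
    and "topspace T \<noteq> {}"
  shows "\<exists>\<D>\<subseteq>\<C>. k_cover (topspace T) k \<D> \<and> k_cover (topspace T) k (\<C> - \<D>)"
proof -
  obtain \<W>1 \<W>2 \<V>1 \<V>2 where \<W>: "\<W>1 \<union> \<W>2 = cartesian_power k ` \<C>" "\<W>1 \<inter> \<W>2 = {}"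
    and \<V>: "\<V>1 \<subseteq> \<W>1" "L (power_topology T k) \<V>1" "\<V>2 \<subseteq> \<W>2" "L (power_topology T k) \<V>2"
    using assms(1)[unfolded Split_def, rule_format, OF assms(2)] by (elim exE conjE) (rule that; assumption)
  define \<D> where "\<D> = {U \<in> \<C>. cartesian_power k U \<in> \<W>1}"
  have "\<W>1 \<subseteq> cartesian_power k ` \<D> \<and> \<W>2 \<subseteq> cartesian_power k ` (\<C> - \<D>)"
  proof (intro conjI subsetI)
    fix W assume "W \<in> \<W>1"
    then obtain U where "U \<in> \<C>" "W = cartesian_power k U"
      using \<W>(1) by blast
    with \<open>W \<in> \<W>1\<close> show "W \<in> cartesian_power k ` \<D>"
      unfolding \<D>_def by blast
  next
    fix W assume "W \<in> \<W>2"
    then obtain U where "U \<in> \<C>" "W = cartesian_power k U"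
      using \<W>(1) by blast
    with \<open>W \<in> \<W>2\<close> \<W>(2) show "W \<in> cartesian_power k ` (\<C> - \<D>)"
      unfolding \<D>_def by blast
  qed
  moreover have "cartesian_power k (topspace T) = \<Union>\<V>" if "L (power_topology T k) \<V>" for \<V>
    using cover[OF that] unfolding is_cover_def by simp
  ultimately have "cartesian_power k (topspace T) \<subseteq> \<Union>(cartesian_power k ` \<D>)"
    "cartesian_power k (topspace T) \<subseteq> \<Union>(cartesian_power k ` (\<C> - \<D>))"
    using \<V> by (metis Union_mono order_trans)+
  then have "k_cover (topspace T) k \<D>" "k_cover (topspace T) k (\<C> - \<D>)"
    using assms(4) by (simp_all add: k_cover_if_cartesian_powers_cover)
  moreover have "\<D> \<subseteq> \<C>"
    unfolding \<D>_def by blast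
  ultimately show ?thesis
    by blast
qed

lemma Split_if_Split_powers:
  fixes Q :: "'a topology \<Rightarrow> 'a set set \<Rightarrow> bool"
  assumes split_powers: "\<And>k. k \<ge> 1 \<Longrightarrow> Split Q' L (power_topology T k)"
    and omega: "\<And>\<U>. Q T \<U> \<Longrightarrow> omega_cover T \<U>"
    and subfamily: "\<And>\<U> \<V>. Q T \<U> \<Longrightarrow> \<V> \<subseteq> \<U> \<Longrightarrow> omega_cover T \<V> \<Longrightarrow> Q T \<V>"
    and powers: "\<And>\<U> k. Q T \<U> \<Longrightarrow> k \<ge> 1 \<Longrightarrow> Q' (power_topology T k) (cartesian_power k ` \<U>)"
    and cover: "\<And>k \<V>. L (power_topology T k) \<V> \<Longrightarrow> is_cover (power_topology T k) \<V>"
  shows "Split Q Q T"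
  unfolding Split_def
proof (intro allI impI)
  fix \<U> assume "Q T \<U>"
  have "\<exists>\<A>\<subseteq>\<U>. Q T \<A> \<and> Q T (\<U> - \<A>)"
  proof (rule split_into_omega_subfamilies[where S = "topspace T"])
    show "omega_family (topspace T) \<C>" if "Q T \<C>" for \<C>
      using omega[OF that] by (simp add: omega_cover_iff_omega_family)
    show "Q T \<D>" if "Q T \<C>" "\<D> \<subseteq> \<C>" "omega_family (topspace T) \<D>" for \<C> \<D>
      using omega_cover_subfamily[OF omega[OF that(1)] that(2,3)] by (rule subfamily[OF that(1,2)])
    show "\<exists>\<D>\<subseteq>\<C>. k_cover (topspace T) k \<D> \<and> k_cover (topspace T) k (\<C> - \<D>)"
      if "Q T \<C>" "k \<ge> 1" for \<C> k
      using split_powers[OF that(2)] powers[OF that] cover omega_cover_nonempty_space[OF omega[OF that(1)]]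
      by (rule k_covers_if_Split_power)
  qed fact
  then obtain \<A> where "\<A> \<subseteq> \<U>" "Q T \<A>" "Q T (\<U> - \<A>)"
    by blast
  then show "\<exists>\<U>1 \<U>2. \<U>1 \<union> \<U>2 = \<U> \<and> \<U>1 \<inter> \<U>2 = {} \<and> (\<exists>\<V>\<subseteq>\<U>1. Q T \<V>) \<and> (\<exists>\<V>\<subseteq>\<U>2. Q T \<V>)"
    by (intro exI[of _ \<A>] exI[of _ "\<U> - \<A>"]) blast
qed

theorem theorem8p4:
  fixes X :: "real set"
  assumes "infinite X"
  shows "((\<forall>k\<ge>1. Split Omega Lambda (power_space X k)) \<longrightarrow> Split Omega Omega (real_subspace X))
       \<and> ((\<forall>k\<ge>1. Split C_Omega C_Lambda (power_space X k)) \<longrightarrow> Split C_Omega C_Omega (real_subspace X))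
       \<and> ((\<forall>k\<ge>1. Split B_Omega B_Lambda (power_space X k)) \<longrightarrow> Split B_Omega B_Omega (real_subspace X))"
proof (intro conjI impI)
  have power_space: "power_space X k = power_topology (real_subspace X) k" for k
    by (simp add: power_space_def real_subspace_def)
  show "Split Omega Omega (real_subspace X)" if "\<forall>k\<ge>1. Split Omega Lambda (power_space X k)"
    using that
    by (intro Split_if_Split_powers[where Q' = Omega and L = Lambda] Omega_cartesian_powers)
      (auto simp: power_space Omega_def Lambda_def large_cover_def)
  show "Split C_Omega C_Omega (real_subspace X)" if "\<forall>k\<ge>1. Split C_Omega C_Lambda (power_space X k)"
    using that
    by (intro Split_if_Split_powers[where Q' = C_Omega and L = C_Lambda] C_Omega_cartesian_powers)
      (auto simp: power_space C_Omega_def C_Lambda_def large_cover_def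
        intro: countable_subset)
  show "Split B_Omega B_Omega (real_subspace X)" if "\<forall>k\<ge>1. Split B_Omega B_Lambda (power_space X k)"
    using that
    by (intro Split_if_Split_powers[where Q' = B_Omega and L = B_Lambda] B_Omega_cartesian_powers)
      (auto simp: power_space B_Omega_def B_Lambda_def large_cover_def
        intro: countable_subset)
qed

end
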